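(* For any two metric directed multigraphs $X=(V,E,r,\ell)$ and $X'$, \[d_{\mathrm{GH}}(X,X')\le\tfrac12|E|\,d_{\vec{\mathcal G}}(X,X'),\] where on the left $X$ and $X'$ are viewed as metric spaces.
   Context: A metric directed multigraph (MDM) is $(V,E,r,\ell)$ with $V,E$ finite, $r=(r_1,r_2):E\to V\times V$ (tail, head), $\ell:E\to(0,\infty)$. $d_{\vec{\mathcal G}}(X,X')=\inf_{(f,g)}\sup_{e\in E}|\ell(e)-\ell'(g(e))|$, infimum over pairs of bijections $f:V\to V'$, $g:E\to E'$ with $r'(g(e))=(f(r_1(e)),f(r_2(e)))$, and $=+\infty$ if there is no such pair. An MDM is viewed as a metric space by replacing each edge $e$ by a line segment of length $\ell(e)$ glued at its endpoint vertices, forgetting orientations, with the induced path (length) metric. $d_{\mathrm{GH}}$ is the Gromov–Hausdorff distance. *)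

theory Defs
  imports "HOL-Analysis.Analysis" "HOL-Library.Extended_Nonnegative_Real"
begin

record ('v, 'e) mdm =
  mdm_V    :: "'v set"
  mdm_E    :: "'e set"
  mdm_tail :: "'e \<Rightarrow> 'v"
  mdm_head :: "'e \<Rightarrow> 'v"
  mdm_len  :: "'e \<Rightarrow> real"

definition wf_mdm :: "('v, 'e) mdm \<Rightarrow> bool" where
  "wf_mdm X \<longleftrightarrow> finite (mdm_V X) \<and> finite (mdm_E X) \<and>
     (\<forall>e\<in>mdm_E X. mdm_tail X e \<in> mdm_V X \<and> mdm_head X e \<in> mdm_V X \<and> mdm_len X e > 0)"

text \<open>The distance between MDMs: infimum over isomorphisms (f,g) of the sup-difference of lengths;
  infimum of the empty set is \<open>top\<close> (= +infinity).\<close>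
definition mdm_dist :: "('v, 'e) mdm \<Rightarrow> ('w, 'f) mdm \<Rightarrow> ennreal" where
  "mdm_dist X Y =
     (INF fg \<in> {(f, g). bij_betw f (mdm_V X) (mdm_V Y) \<and> bij_betw g (mdm_E X) (mdm_E Y) \<and>
                 (\<forall>e\<in>mdm_E X. mdm_tail Y (g e) = f (mdm_tail X e) \<and> mdm_head Y (g e) = f (mdm_head X e))}.
        (SUP e\<in>mdm_E X. ennreal \<bar>mdm_len X e - mdm_len Y (snd fg e)\<bar>))"

text \<open>Points of the realisation: vertices, and interior points of edges (edge e, parameter t with
  0 < t < len e, measured from the tail).\<close>
datatype ('v, 'e) gpt = Vtx 'v | EPt 'e real

definition mdm_points :: "('v, 'e) mdm \<Rightarrow> ('v, 'e) gpt set" where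
  "mdm_points X = Vtx ` mdm_V X \<union> {EPt e t | e t. e \<in> mdm_E X \<and> 0 < t \<and> t < mdm_len X e}"

definition on_edge :: "('v, 'e) mdm \<Rightarrow> 'e \<Rightarrow> ('v, 'e) gpt \<Rightarrow> real \<Rightarrow> bool" where
  "on_edge X e p t \<longleftrightarrow> e \<in> mdm_E X \<and>
     ((0 < t \<and> t < mdm_len X e \<and> p = EPt e t) \<or>
      (t = 0 \<and> p = Vtx (mdm_tail X e)) \<or>
      (t = mdm_len X e \<and> p = Vtx (mdm_head X e)))"

inductive chain :: "('v, 'e) mdm \<Rightarrow> ('v, 'e) gpt \<Rightarrow> ('v, 'e) gpt \<Rightarrow> real \<Rightarrow> bool"
  for X where
  chain_refl: "chain X p p 0"
| chain_step: "on_edge X e p s \<Longrightarrow> on_edge X e q t \<Longrightarrow> chain X q r L \<Longrightarrow> chain X p r (\<bar>s - t\<bar> + L)"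

definition mdm_metric :: "('v, 'e) mdm \<Rightarrow> ('v, 'e) gpt \<Rightarrow> ('v, 'e) gpt \<Rightarrow> ennreal" where
  "mdm_metric X p q = (INF L \<in> {L. chain X p q L}. ennreal L)"

definition ext_metric_on :: "'a set \<Rightarrow> ('a \<Rightarrow> 'a \<Rightarrow> ennreal) \<Rightarrow> bool" where
  "ext_metric_on S d \<longleftrightarrow> (\<forall>x\<in>S. \<forall>y\<in>S. d x y = d y x \<and> (d x y = 0 \<longleftrightarrow> x = y) \<and>
                              (\<forall>z\<in>S. d x z \<le> d x y + d y z))"

definition hausdorff_dist :: "('a \<Rightarrow> 'a \<Rightarrow> ennreal) \<Rightarrow> 'a set \<Rightarrow> 'a set \<Rightarrow> ennreal" where
  "hausdorff_dist d A B = max (SUP a\<in>A. INF b\<in>B. d a b) (SUP b\<in>B. INF a\<in>A. d a b)"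

definition GH_dist :: "'a set \<Rightarrow> ('a \<Rightarrow> 'a \<Rightarrow> ennreal) \<Rightarrow> 'b set \<Rightarrow> ('b \<Rightarrow> 'b \<Rightarrow> ennreal) \<Rightarrow> ennreal" where
  "GH_dist A dA B dB =
     (INF d \<in> {d. ext_metric_on (Inl ` A \<union> Inr ` B) d \<and>
                  (\<forall>a\<in>A. \<forall>a'\<in>A. d (Inl a) (Inl a') = dA a a') \<and>
                  (\<forall>b\<in>B. \<forall>b'\<in>B. d (Inr b) (Inr b') = dB b b')}.
        hausdorff_dist d (Inl ` A) (Inr ` B))"

definition mdm_GH :: "('v, 'e) mdm \<Rightarrow> ('w, 'f) mdm \<Rightarrow> ennreal" where
  "mdm_GH X Y = GH_dist (mdm_points X) (mdm_metric X) (mdm_points Y) (mdm_metric Y)"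

end

theory Submission
  imports Defs
begin

text \<open>Let (f, g) be an isomorphism of the underlying multigraphs. Send each vertex v to f v and
  the point at parameter t of an edge e to the point at parameter t l'(g e) / l(e) of g e.
  A chain between two points can be shortened until it runs along every edge e for a total
  length of at most l(e); rescaling it then changes its length by at most the sum over e of
  |l'(g e) - l(e)|, which is at most |E| times the sup-difference of lengths, and the same holds
  for the inverse map. Finally, a surjection \<phi> between metric spaces that changes distances by
  at most K yields a Gromov--Hausdorff distance of at most K/2: glue the two spaces with the
  cross distances inf over a' of d(a, a') + r + d'(\<phi> a', b), for any r > K/2.\<close>

section \<open>Gromov--Hausdorff distance via a map of small distortion\<close>

lemma ennreal_INF_add_const:
  fixes f :: "'i \<Rightarrow> ennreal"
  shows "(INF i\<in>I. f i + c) = (INF i\<in>I. f i) + c"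
proof (cases "I = {}")
  case False
  then show ?thesis
    using continuous_at_Inf_mono[of "\<lambda>x. x + c" "f ` I"]
      continuous_add[of "at_right (Inf (f ` I))" "\<lambda>x. x" "\<lambda>x. c"]
    by (auto simp: mono_def image_comp)
qed simp

lemma ennreal_const_add_INF:
  fixes f :: "'i \<Rightarrow> ennreal"
  shows "(INF i\<in>I. c + f i) = c + (INF i\<in>I. f i)"
  using ennreal_INF_add_const[where f=f and I=I and c=c] by (simp add: add.commute)

lemma ennreal_mult_INF:
  fixes f :: "'i \<Rightarrow> ennreal"
  assumes "c \<noteq> top" and "I \<noteq> {}"
  shows "c * (INF i\<in>I. f i) = (INF i\<in>I. c * f i)"
proof -
  have "isCont (\<lambda>x. c * x) x" for x
    unfolding isCont_def using assms(1)
    by (intro ennreal_tendsto_cmult tendsto_ident_at) (simp add: less_top)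
  then have "continuous (at_right (Inf (f ` I))) (\<lambda>x. c * x)"
    by (rule continuous_at_imp_continuous_at_within)
  then show ?thesis
    using continuous_at_Inf_mono[of "\<lambda>x. c * x" "f ` I"] assms(2)
    by (auto simp: mono_def image_comp mult_left_mono)
qed

lemma
  assumes "ext_metric_on S d" and "x \<in> S" and "y \<in> S"
  shows ext_metric_on_sym: "d x y = d y x"
    and ext_metric_on_eq_0_iff: "d x y = 0 \<longleftrightarrow> x = y"
    and ext_metric_on_triangle: "z \<in> S \<Longrightarrow> d x z \<le> d x y + d y z"
  using assms unfolding ext_metric_on_def by blast+

lemma ext_metric_on_self: "ext_metric_on S d \<Longrightarrow> x \<in> S \<Longrightarrow> d x x = 0"
  by (simp add: ext_metric_on_eq_0_iff)

lemma ennreal_le_double: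
  fixes K r :: real
  assumes "K \<le> 2 * r" and "0 \<le> r"
  shows "ennreal K \<le> ennreal r + ennreal r"
  using assms by (metis ennreal_leI ennreal_plus mult_2)

locale distortion_map =
  fixes A :: "'a set" and dA :: "'a \<Rightarrow> 'a \<Rightarrow> ennreal"
    and B :: "'b set" and dB :: "'b \<Rightarrow> 'b \<Rightarrow> ennreal"
    and \<phi> :: "'a \<Rightarrow> 'b" and K :: real
  assumes metric_A: "ext_metric_on A dA" and metric_B: "ext_metric_on B dB"
    and image_eq: "\<phi> ` A = B"
    and dist_image_le: "\<And>a a'. a \<in> A \<Longrightarrow> a' \<in> A \<Longrightarrow> dB (\<phi> a) (\<phi> a') \<le> dA a a' + ennreal K"
    and dist_le_image: "\<And>a a'. a \<in> A \<Longrightarrow> a' \<in> A \<Longrightarrow> dA a a' \<le> dB (\<phi> a) (\<phi> a') + ennreal K"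
begin

lemma image_in: "a \<in> A \<Longrightarrow> \<phi> a \<in> B"
  using image_eq by blast

definition bridge :: "real \<Rightarrow> 'a \<Rightarrow> 'b \<Rightarrow> ennreal" where
  "bridge r a b = (INF a'\<in>A. dA a a' + ennreal r + dB (\<phi> a') b)"

lemma bridge_ge: "ennreal r \<le> bridge r a b"
  unfolding bridge_def by (rule INF_greatest) (simp add: add_increasing add_increasing2)

lemma bridge_image_le: "a \<in> A \<Longrightarrow> bridge r a (\<phi> a) \<le> ennreal r"
  unfolding bridge_def
  by (rule INF_lower2[of a])
    (simp_all add: ext_metric_on_self[OF metric_A] ext_metric_on_self[OF metric_B] image_in)

lemma bridge_triangle_left:
  assumes "a \<in> A" and "a2 \<in> A"
  shows "bridge r a b \<le> dA a a2 + bridge r a2 b"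
  unfolding bridge_def[of r a2] ennreal_const_add_INF[symmetric]
proof (rule INF_greatest)
  fix a' assume a': "a' \<in> A"
  have "bridge r a b \<le> dA a a' + ennreal r + dB (\<phi> a') b"
    unfolding bridge_def using a' by (rule INF_lower)
  also have "\<dots> \<le> dA a a2 + dA a2 a' + ennreal r + dB (\<phi> a') b"
    using ext_metric_on_triangle[OF metric_A assms a'] by (intro add_right_mono)
  finally show "bridge r a b \<le> dA a a2 + (dA a2 a' + ennreal r + dB (\<phi> a') b)"
    by (simp add: add.assoc)
qed

lemma bridge_triangle_right:
  assumes "b \<in> B" and "b2 \<in> B"
  shows "bridge r a b2 \<le> bridge r a b + dB b b2"
  unfolding bridge_def[of r a b] ennreal_INF_add_const[symmetric]
proof (rule INF_greatest)
  fix a' assume a': "a' \<in> A"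
  have "bridge r a b2 \<le> dA a a' + ennreal r + dB (\<phi> a') b2"
    unfolding bridge_def using a' by (rule INF_lower)
  also have "\<dots> \<le> dA a a' + ennreal r + (dB (\<phi> a') b + dB b b2)"
    using ext_metric_on_triangle[OF metric_B image_in[OF a'] assms] by (intro add_left_mono)
  finally show "bridge r a b2 \<le> dA a a' + ennreal r + dB (\<phi> a') b + dB b b2"
    by (simp add: add.assoc)
qed

lemma dist_A_le_bridge:
  assumes "K \<le> 2 * r" and "0 \<le> r" and "a \<in> A" and "a2 \<in> A" and "b \<in> B"
  shows "dA a a2 \<le> bridge r a b + bridge r a2 b"
  unfolding bridge_def ennreal_INF_add_const[symmetric] ennreal_const_add_INF[symmetric]
proof (intro INF_greatest)
  fix a' a'' assume a': "a' \<in> A" and a'': "a'' \<in> A"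
  have "dA a' a2 \<le> dA a' a'' + dA a2 a''"
    using ext_metric_on_triangle[OF metric_A a' a'' assms(4)] ext_metric_on_sym[OF metric_A a'' assms(4)]
    by simp
  with ext_metric_on_triangle[OF metric_A assms(3) a' assms(4)]
  have via_a': "dA a a2 \<le> dA a a' + (dA a' a'' + dA a2 a'')"
    by (rule order.trans[OF _ add_left_mono])
  have "dB (\<phi> a') (\<phi> a'') \<le> dB (\<phi> a') b + dB (\<phi> a'') b"
    using ext_metric_on_triangle[OF metric_B image_in[OF a'] assms(5) image_in[OF a'']]
      ext_metric_on_sym[OF metric_B assms(5) image_in[OF a'']]
    by simp
  from order.trans[OF dist_le_image[OF a' a''] add_mono[OF this ennreal_le_double[OF assms(1,2)]]]
  have "dA a a2 \<le> dA a a' + (dB (\<phi> a') b + dB (\<phi> a'') b + (ennreal r + ennreal r) + dA a2 a'')"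
    by (rule order.trans[OF via_a' add_left_mono[OF add_right_mono]])
  then show "dA a a2 \<le> dA a a' + ennreal r + dB (\<phi> a') b + (dA a2 a'' + ennreal r + dB (\<phi> a'') b)"
    by (simp only: ac_simps)
qed

lemma dist_B_le_bridge:
  assumes "K \<le> 2 * r" and "0 \<le> r" and "a \<in> A" and "b \<in> B" and "b2 \<in> B"
  shows "dB b b2 \<le> bridge r a b + bridge r a b2"
  unfolding bridge_def ennreal_INF_add_const[symmetric] ennreal_const_add_INF[symmetric]
proof (intro INF_greatest)
  fix a' a'' assume a': "a' \<in> A" and a'': "a'' \<in> A"
  have "dB b b2 \<le> dB (\<phi> a') b + dB (\<phi> a') b2"
    using ext_metric_on_triangle[OF metric_B assms(4) image_in[OF a'] assms(5)]
      ext_metric_on_sym[OF metric_B assms(4) image_in[OF a']]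
    by simp
  with ext_metric_on_triangle[OF metric_B image_in[OF a'] image_in[OF a''] assms(5)]
  have via_a': "dB b b2 \<le> dB (\<phi> a') b + (dB (\<phi> a') (\<phi> a'') + dB (\<phi> a'') b2)"
    by (rule order.trans[OF _ add_left_mono, rotated])
  have "dA a' a'' \<le> dA a a' + dA a a''"
    using ext_metric_on_triangle[OF metric_A a' assms(3) a''] ext_metric_on_sym[OF metric_A a' assms(3)]
    by simp
  from order.trans[OF dist_image_le[OF a' a''] add_mono[OF this ennreal_le_double[OF assms(1,2)]]]
  have "dB b b2 \<le> dB (\<phi> a') b + (dA a a' + dA a a'' + (ennreal r + ennreal r) + dB (\<phi> a'') b2)"
    by (rule order.trans[OF via_a' add_left_mono[OF add_right_mono]])
  then show "dB b b2 \<le> dA a a' + ennreal r + dB (\<phi> a') b + (dA a a'' + ennreal r + dB (\<phi> a'') b2)"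
    by (simp only: ac_simps)
qed

definition glued :: "real \<Rightarrow> 'a + 'b \<Rightarrow> 'a + 'b \<Rightarrow> ennreal" where
  "glued r x y = (case (x, y) of
       (Inl a, Inl a') \<Rightarrow> dA a a'
     | (Inr b, Inr b') \<Rightarrow> dB b b'
     | (Inl a, Inr b) \<Rightarrow> bridge r a b
     | (Inr b, Inl a) \<Rightarrow> bridge r a b)"

lemma glued_simps [simp]:
  "glued r (Inl a) (Inl a') = dA a a'"
  "glued r (Inr b) (Inr b') = dB b b'"
  "glued r (Inl a) (Inr b) = bridge r a b"
  "glued r (Inr b) (Inl a) = bridge r a b"
  by (simp_all add: glued_def)

lemma glued_metric:
  assumes "K \<le> 2 * r" and "0 < r"
  shows "ext_metric_on (Inl ` A \<union> Inr ` B) (glued r)"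
  unfolding ext_metric_on_def
proof (intro ballI conjI)
  fix x y z assume x: "x \<in> Inl ` A \<union> Inr ` B" and y: "y \<in> Inl ` A \<union> Inr ` B"
    and z: "z \<in> Inl ` A \<union> Inr ` B"
  show "glued r x y = glued r y x"
    using x y by (auto simp: ext_metric_on_sym[OF metric_A] ext_metric_on_sym[OF metric_B])
  have "bridge r a b \<noteq> 0" for a b
    using bridge_ge[of r a b] assms(2) by (auto simp: le_zero_eq)
  then show "glued r x y = 0 \<longleftrightarrow> x = y"
    using x y by (auto simp: ext_metric_on_eq_0_iff[OF metric_A] ext_metric_on_eq_0_iff[OF metric_B])
  have bridge_triangle_left': "bridge r a2 b \<le> bridge r a b + dA a a2" if "a \<in> A" "a2 \<in> A" for a a2 b
    using bridge_triangle_left[OF that(2,1)] ext_metric_on_sym[OF metric_A that] by (simp add: add.commute)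
  have bridge_triangle_right': "bridge r a b \<le> dB b b2 + bridge r a b2" if "b \<in> B" "b2 \<in> B" for a b b2
    using bridge_triangle_right[OF that(2,1)] ext_metric_on_sym[OF metric_B that] by (simp add: add.commute)
  show "glued r x z \<le> glued r x y + glued r y z"
    using x y z assms(1) less_imp_le[OF assms(2)]
    by (auto intro: ext_metric_on_triangle[OF metric_A] ext_metric_on_triangle[OF metric_B]
        bridge_triangle_left bridge_triangle_right bridge_triangle_left' bridge_triangle_right'
        dist_A_le_bridge dist_B_le_bridge)
qed

lemma hausdorff_glued_le: "hausdorff_dist (glued r) (Inl ` A) (Inr ` B) \<le> ennreal r"
  unfolding hausdorff_dist_def
proof (rule max.boundedI)
  have "(INF y\<in>Inr ` B. glued r (Inl a) y) \<le> ennreal r" if "a \<in> A" for a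
    using that image_in bridge_image_le by (intro INF_lower2[of "Inr (\<phi> a)"]) auto
  then show "(SUP x\<in>Inl ` A. INF y\<in>Inr ` B. glued r x y) \<le> ennreal r"
    by (auto intro: SUP_least)
  have "(INF x\<in>Inl ` A. glued r x (Inr (\<phi> a))) \<le> ennreal r" if "a \<in> A" for a
    using that bridge_image_le by (intro INF_lower2[of "Inl a"]) auto
  then show "(SUP y\<in>Inr ` B. INF x\<in>Inl ` A. glued r x y) \<le> ennreal r"
    using image_eq by (auto intro: SUP_least)
qed

lemma GH_dist_le:
  assumes "0 \<le> K"
  shows "GH_dist A dA B dB \<le> ennreal (K / 2)"
proof (rule dense_ge)
  fix x assume x: "ennreal (K / 2) < x"
  show "GH_dist A dA B dB \<le> x"
  proof (cases x)
    case (real r)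
    with x assms have "K \<le> 2 * r" and "0 < r"
      by (auto simp: ennreal_less_iff)
    have "GH_dist A dA B dB \<le> hausdorff_dist (glued r) (Inl ` A) (Inr ` B)"
      unfolding GH_dist_def using glued_metric[OF \<open>K \<le> 2 * r\<close> \<open>0 < r\<close>]
      by (intro INF_lower) auto
    also have "\<dots> \<le> x"
      using hausdorff_glued_le real by simp
    finally show ?thesis .
  qed simp
qed

end

section \<open>The path metric of a metric directed multigraph\<close>

lemma chain_nonneg: "chain X p q L \<Longrightarrow> 0 \<le> L"
  by (induction rule: chain.induct) auto

lemma chain_trans: "chain X p q L1 \<Longrightarrow> chain X q r L2 \<Longrightarrow> chain X p r (L1 + L2)"
proof (induction rule: chain.induct)
  case (chain_step e p s q t r' L)
  then have "chain X p r (\<bar>s - t\<bar> + (L + L2))"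
    by (intro chain.chain_step) auto
  then show ?case
    by (simp add: add.assoc)
qed simp

lemma chain_sym: "chain X p q L \<Longrightarrow> chain X q p L"
proof (induction rule: chain.induct)
  case (chain_refl p)
  then show ?case
    by (rule chain.chain_refl)
next
  case (chain_step e p s q t r L)
  have "chain X q p (\<bar>t - s\<bar> + 0)"
    using chain_step(2,1) chain.chain_refl by (rule chain.chain_step)
  from chain_trans[OF chain_step(4) this] show ?case
    by (simp add: abs_minus_commute add.commute)
qed

definition edge_lipschitz :: "('v, 'e) mdm \<Rightarrow> (('v, 'e) gpt \<Rightarrow> real) \<Rightarrow> bool" where
  "edge_lipschitz X h \<longleftrightarrow>
     (\<forall>e x s y t. on_edge X e x s \<longrightarrow> on_edge X e y t \<longrightarrow> h x \<le> h y + \<bar>s - t\<bar>)"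

lemma chain_edge_lipschitz:
  assumes "edge_lipschitz X h"
  shows "chain X p q L \<Longrightarrow> h p \<le> h q + L"
proof (induction rule: chain.induct)
  case (chain_step e p s q t r L)
  then show ?case
    using assms unfolding edge_lipschitz_def by force
qed simp

lemma min_min_lipschitz:
  fixes a b a' b' c d :: real
  assumes "a \<le> a' + d" and "b \<le> b' + d" and "0 \<le> d"
  shows "min c (min a b) \<le> min c (min a' b') + d"
  using assms by (simp add: min_def)

text \<open>The separating function is the distance to w along a single edge, capped at c; the cap
  is at most every edge length, so that h is well defined at the vertices.\<close>

lemma separating_edge_lipschitz_Vtx:
  assumes wf: "wf_mdm X" and p: "p \<in> mdm_points X" and "p \<noteq> Vtx w"
  shows "\<exists>h. edge_lipschitz X h \<and> h (Vtx w) = 0 \<and> 0 < h p"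
proof -
  have fin: "finite (mdm_E X)" and pos: "\<And>e. e \<in> mdm_E X \<Longrightarrow> 0 < mdm_len X e"
    using wf unfolding wf_mdm_def by auto
  define c where "c = (if mdm_E X = {} then 1 else Min (mdm_len X ` mdm_E X) / 2)"
  have "0 < c"
    unfolding c_def using fin pos by auto
  have c_le: "c \<le> mdm_len X e" if "e \<in> mdm_E X" for e
  proof -
    have "Min (mdm_len X ` mdm_E X) \<le> mdm_len X e"
      using fin that by auto
    moreover have "0 < Min (mdm_len X ` mdm_E X)"
      using fin pos that by (subst Min_gr_iff) auto
    ultimately show ?thesis
      unfolding c_def using that by auto
  qed
  define H where "H e s = min c (min (if mdm_tail X e = w then s else c)
      (if mdm_head X e = w then mdm_len X e - s else c))" for e s
  define h where "h x = (case x of Vtx v \<Rightarrow> if v = w then 0 else c | EPt e t \<Rightarrow> H e t)" for x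
  have h_on_edge: "h x = H e s" if "on_edge X e x s" for e x s
    using that \<open>0 < c\<close> c_le[of e] pos[of e] unfolding on_edge_def h_def H_def by auto
  have "edge_lipschitz X h"
    unfolding edge_lipschitz_def
  proof (intro allI impI)
    fix e x s y t assume "on_edge X e x s" and "on_edge X e y t"
    then show "h x \<le> h y + \<bar>s - t\<bar>"
      unfolding h_on_edge[OF \<open>on_edge X e x s\<close>] h_on_edge[OF \<open>on_edge X e y t\<close>] H_def
      by (intro min_min_lipschitz) auto
  qed
  moreover have "0 < h p"
    using p assms(3) \<open>0 < c\<close> unfolding mdm_points_def h_def H_def by (auto split: if_splits)
  ultimately show ?thesis
    unfolding h_def by auto
qed

text \<open>Here the separating function is the distance to t0 within e0, capped at the distance c from
  t0 to the ends of e0.\<close>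

lemma separating_edge_lipschitz_EPt:
  fixes X :: "('v, 'e) mdm"
  assumes q: "EPt e0 t0 \<in> mdm_points X" and p: "p \<in> mdm_points X" and "p \<noteq> EPt e0 t0"
  shows "\<exists>h. edge_lipschitz X h \<and> h (EPt e0 t0) = 0 \<and> 0 < h p"
proof -
  have "0 < t0" "t0 < mdm_len X e0"
    using q unfolding mdm_points_def by auto
  define c where "c = min t0 (mdm_len X e0 - t0)"
  have "0 < c"
    unfolding c_def using \<open>0 < t0\<close> \<open>t0 < mdm_len X e0\<close> by simp
  define H where "H e s = (if e = e0 then min c \<bar>s - t0\<bar> else c)" for e s
  define h where "h x = (case x of Vtx v \<Rightarrow> c | EPt e t \<Rightarrow> H e t)" for x :: "('v, 'e) gpt"
  have h_on_edge: "h x = H e s" if "on_edge X e x s" for e x s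
    using that \<open>0 < c\<close> unfolding on_edge_def h_def H_def c_def by auto
  have "edge_lipschitz X h"
    unfolding edge_lipschitz_def
  proof (intro allI impI)
    fix e x s y t assume "on_edge X e x s" and "on_edge X e y t"
    then show "h x \<le> h y + \<bar>s - t\<bar>"
      unfolding h_on_edge[OF \<open>on_edge X e x s\<close>] h_on_edge[OF \<open>on_edge X e y t\<close>] H_def
      by (auto simp: min_def)
  qed
  moreover have "0 < h p"
    using p assms(3) \<open>0 < c\<close> unfolding mdm_points_def h_def H_def by (auto split: if_splits)
  ultimately show ?thesis
    using \<open>0 < c\<close> unfolding h_def H_def by auto
qed

lemma mdm_metric_le_chain: "chain X p q L \<Longrightarrow> mdm_metric X p q \<le> ennreal L"
  unfolding mdm_metric_def by (rule INF_lower) simp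

lemma mdm_metric_sym: "mdm_metric X p q = mdm_metric X q p"
proof -
  have "{L. chain X p q L} = {L. chain X q p L}"
    using chain_sym by blast
  then show ?thesis
    unfolding mdm_metric_def by simp
qed

lemma mdm_metric_self: "mdm_metric X p p = 0"
  using mdm_metric_le_chain[OF chain_refl] by simp

lemma mdm_metric_triangle: "mdm_metric X p r \<le> mdm_metric X p q + mdm_metric X q r"
  unfolding mdm_metric_def ennreal_INF_add_const[symmetric] ennreal_const_add_INF[symmetric]
proof (intro INF_greatest)
  fix L1 L2 assume "L1 \<in> {L. chain X p q L}" and "L2 \<in> {L. chain X q r L}"
  then have "chain X p r (L1 + L2)" and "0 \<le> L1" and "0 \<le> L2"
    using chain_trans chain_nonneg by auto
  then show "(INF L\<in>{L. chain X p r L}. ennreal L) \<le> ennreal L1 + ennreal L2"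
    by (auto simp: ennreal_plus[symmetric] simp del: ennreal_plus intro: INF_lower2)
qed

lemma edge_lipschitz_le_mdm_metric:
  assumes "edge_lipschitz X h"
  shows "ennreal (h p - h q) \<le> mdm_metric X p q"
  unfolding mdm_metric_def
proof (rule INF_greatest)
  fix L assume "L \<in> {L. chain X p q L}"
  then have "h p - h q \<le> L"
    using chain_edge_lipschitz[OF assms] by force
  then show "ennreal (h p - h q) \<le> ennreal L"
    by (rule ennreal_leI)
qed

lemma mdm_metric_eq_0_iff:
  assumes "wf_mdm X" and "p \<in> mdm_points X" and "q \<in> mdm_points X"
  shows "mdm_metric X p q = 0 \<longleftrightarrow> p = q"
proof
  assume "mdm_metric X p q = 0"
  show "p = q"
  proof (rule ccontr)
    assume "p \<noteq> q"
    have "\<exists>h. edge_lipschitz X h \<and> h q = 0 \<and> 0 < h p"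
    proof (cases q)
      case (Vtx w)
      then show ?thesis
        using separating_edge_lipschitz_Vtx[OF assms(1,2), of w] \<open>p \<noteq> q\<close> by simp
    next
      case (EPt e t)
      then show ?thesis
        using separating_edge_lipschitz_EPt[of e t X p] assms(2,3) \<open>p \<noteq> q\<close> by simp
    qed
    then obtain h where "edge_lipschitz X h" "h q = 0" "0 < h p"
      by blast
    then show False
      using edge_lipschitz_le_mdm_metric[of X h p q] \<open>mdm_metric X p q = 0\<close> by simp
  qed
qed (simp add: mdm_metric_self)

lemma ext_metric_on_mdm_metric:
  "wf_mdm X \<Longrightarrow> ext_metric_on (mdm_points X) (mdm_metric X)"
  unfolding ext_metric_on_def
  using mdm_metric_triangle by (auto simp: mdm_metric_eq_0_iff intro: mdm_metric_sym)

fun walk ::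
  "('v, 'e) mdm \<Rightarrow> ('v, 'e) gpt \<Rightarrow> ('e \<times> real \<times> real) list \<Rightarrow> ('v, 'e) gpt \<Rightarrow> bool"
where
  "walk X p [] q \<longleftrightarrow> p = q"
| "walk X p ((e, s, t) # ws) q \<longleftrightarrow> (\<exists>x. on_edge X e p s \<and> on_edge X e x t \<and> walk X x ws q)"

definition walk_len :: "('e \<times> real \<times> real) list \<Rightarrow> real" where
  "walk_len ws = sum_list (map (\<lambda>(e, s, t). \<bar>s - t\<bar>) ws)"

definition walk_len_on :: "'e \<Rightarrow> ('e \<times> real \<times> real) list \<Rightarrow> real" where
  "walk_len_on e ws = sum_list (map (\<lambda>(e', s, t). if e' = e then \<bar>s - t\<bar> else 0) ws)"

lemma walk_len_simps [simp]:
  "walk_len [] = 0"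
  "walk_len ((e, s, t) # ws) = \<bar>s - t\<bar> + walk_len ws"
  "walk_len (ws @ ws') = walk_len ws + walk_len ws'"
  by (simp_all add: walk_len_def)

lemma walk_len_on_simps [simp]:
  "walk_len_on e [] = 0"
  "walk_len_on e ((e', s, t) # ws) = (if e' = e then \<bar>s - t\<bar> else 0) + walk_len_on e ws"
  "walk_len_on e (ws @ ws') = walk_len_on e ws + walk_len_on e ws'"
  by (simp_all add: walk_len_on_def)

lemma walk_len_on_nonneg: "0 \<le> walk_len_on e ws"
  by (induction ws) auto

lemma walk_len_on_le_walk_len: "walk_len_on e ws \<le> walk_len ws"
  by (induction ws) auto

lemma walk_len_on_eq_0: "\<forall>step\<in>set ws. fst step \<noteq> e \<Longrightarrow> walk_len_on e ws = 0"
  by (induction ws) auto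

lemma sum_list_weighted_steps:
  assumes "finite S" and "fst ` set ws \<subseteq> S"
  shows "sum_list (map (\<lambda>(e, s, t). c e * \<bar>s - t\<bar>) ws) = (\<Sum>e\<in>S. c e * walk_len_on e ws)"
  using assms(2)
proof (induction ws)
  case (Cons step ws)
  obtain e0 s t where step: "step = (e0, s, t)"
    by (cases step) auto
  with Cons.prems have "e0 \<in> S"
    by simp
  have "(\<Sum>e\<in>S. c e * (if e0 = e then \<bar>s - t\<bar> else 0)) = c e0 * \<bar>s - t\<bar>"
    using assms(1) \<open>e0 \<in> S\<close> by (simp add: if_distrib sum.delta cong: if_cong)
  then show ?case
    using Cons step by (simp add: distrib_left sum.distrib)
qed simp

lemma walk_len_eq_sum:
  "finite S \<Longrightarrow> fst ` set ws \<subseteq> S \<Longrightarrow> walk_len ws = (\<Sum>e\<in>S. walk_len_on e ws)"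
  using sum_list_weighted_steps[where c = "\<lambda>_. 1"] by (simp add: walk_len_def)

lemma walk_append: "walk X p (ws @ ws') q \<longleftrightarrow> (\<exists>y. walk X p ws y \<and> walk X y ws' q)"
proof (induction ws arbitrary: p)
  case (Cons step ws)
  then show ?case
    by (cases step) auto
qed simp

lemma chain_iff_walk: "chain X p q L \<longleftrightarrow> (\<exists>ws. walk X p ws q \<and> walk_len ws = L)"
proof
  show "chain X p q L \<Longrightarrow> \<exists>ws. walk X p ws q \<and> walk_len ws = L"
  proof (induction rule: chain.induct)
    case (chain_refl p)
    show ?case
      by (intro exI[of _ "[]"]) simp
  next
    case (chain_step e p s q t r L)
    then obtain ws where "walk X q ws r" "walk_len ws = L"
      by blast
    with chain_step show ?case
      by (intro exI[of _ "(e, s, t) # ws"]) auto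
  qed
  have "walk X p ws q \<Longrightarrow> chain X p q (walk_len ws)" for ws
  proof (induction ws arbitrary: p)
    case (Cons step ws)
    then show ?case
      by (cases step) (auto intro: chain_step)
  qed (simp add: chain_refl)
  then show "\<exists>ws. walk X p ws q \<and> walk_len ws = L \<Longrightarrow> chain X p q L"
    by blast
qed

lemma on_edge_param_range:
  "wf_mdm X \<Longrightarrow> on_edge X e p s \<Longrightarrow> e \<in> mdm_E X \<and> 0 \<le> s \<and> s \<le> mdm_len X e"
  unfolding on_edge_def wf_mdm_def by force

lemma walk_step_range:
  assumes "wf_mdm X" and "walk X p ws q" and "(e, s, t) \<in> set ws"
  shows "e \<in> mdm_E X \<and> 0 \<le> s \<and> s \<le> mdm_len X e \<and> 0 \<le> t \<and> t \<le> mdm_len X e"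
  using assms(2,3)
proof (induction ws arbitrary: p)
  case (Cons step ws)
  obtain e' s' t' where step: "step = (e', s', t')"
    by (cases step) auto
  with Cons.prems obtain x where "on_edge X e' p s'" "on_edge X e' x t'" "walk X x ws q"
    by auto
  with Cons.IH[of x] Cons.prems show ?case
    using step on_edge_param_range[OF assms(1)] by auto
qed simp

lemma walk_edges_subset: "wf_mdm X \<Longrightarrow> walk X p ws q \<Longrightarrow> fst ` set ws \<subseteq> mdm_E X"
  using walk_step_range by fastforce

lemma walk_shortcut:
  "walk X p (P @ (e, a, a') # R @ (e, b', b) # Q) q \<Longrightarrow> walk X p (P @ (e, a, b) # Q) q"
  by (auto simp: walk_append)

lemma walk_split_first_last_on:
  assumes wf: "wf_mdm X" and w: "walk X p ws q" and e: "e \<in> mdm_E X"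
    and long: "mdm_len X e < walk_len_on e ws"
  obtains P a a' R b' b Q where "ws = P @ (e, a, a') # R @ (e, b', b) # Q"
    and "\<forall>y\<in>set P. fst y \<noteq> e" and "\<forall>y\<in>set Q. fst y \<noteq> e"
proof -
  have "0 < mdm_len X e"
    using wf e unfolding wf_mdm_def by auto
  with long have "\<exists>step\<in>set ws. fst step = e"
    using walk_len_on_eq_0 by force
  then obtain P step R where ws: "ws = P @ step # R" and "fst step = e"
    and P: "\<forall>y\<in>set P. fst y \<noteq> e"
    by (rule split_list_first_propE)
  then obtain a a' where step: "step = (e, a, a')"
    by (cases step) auto
  have "\<exists>step\<in>set R. fst step = e"
  proof (rule ccontr)
    assume "\<not> ?thesis"
    then have "walk_len_on e ws = \<bar>a - a'\<bar>"
      using ws step walk_len_on_eq_0[OF P] walk_len_on_eq_0[of R e] by auto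
    moreover have "\<bar>a - a'\<bar> \<le> mdm_len X e"
      using walk_step_range[OF wf w, of e a a'] ws step by auto
    ultimately show False
      using long by simp
  qed
  then obtain R1 step' Q where R: "R = R1 @ step' # Q" and "fst step' = e"
    and Q: "\<forall>y\<in>set Q. fst y \<noteq> e"
    by (rule split_list_last_propE)
  obtain b' b where step': "step' = (e, b', b)"
    using \<open>fst step' = e\<close> by (cases step') auto
  show ?thesis
  proof (rule that)
    show "ws = P @ (e, a, a') # R1 @ (e, b', b) # Q"
      using ws step R step' by simp
  qed (fact P Q)+
qed

text \<open>Replacing everything from the first to the last step along e by a single step along e.\<close>

lemma walk_reduce_edge:
  assumes wf: "wf_mdm X" and w: "walk X p ws q" and e: "e \<in> mdm_E X"
  shows "\<exists>ws'. walk X p ws' q \<and> walk_len ws' \<le> walk_len ws \<and> walk_len_on e ws' \<le> mdm_len X e \<and>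
           (\<forall>e'. e' \<noteq> e \<longrightarrow> walk_len_on e' ws' \<le> walk_len_on e' ws)"
proof (cases "walk_len_on e ws \<le> mdm_len X e")
  case True
  with w show ?thesis
    by blast
next
  case False
  then have "mdm_len X e < walk_len_on e ws"
    by simp
  then obtain P a a' R b' b Q where ws: "ws = P @ (e, a, a') # R @ (e, b', b) # Q"
    and P: "\<forall>y\<in>set P. fst y \<noteq> e" and Q: "\<forall>y\<in>set Q. fst y \<noteq> e"
    by (rule walk_split_first_last_on[OF wf w e])
  define ws' where "ws' = P @ (e, a, b) # Q"
  have "walk X p ws' q"
    using w unfolding ws ws'_def by (rule walk_shortcut)
  have ab: "\<bar>a - b\<bar> \<le> mdm_len X e"
    using walk_step_range[OF wf w, of e a a'] walk_step_range[OF wf w, of e b' b] ws by auto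
  have P0: "walk_len_on e P = 0" and Q0: "walk_len_on e Q = 0"
    using walk_len_on_eq_0[OF P] walk_len_on_eq_0[OF Q] .
  have "walk_len_on e ws = \<bar>a - a'\<bar> + walk_len_on e R + \<bar>b' - b\<bar>"
    using ws P0 Q0 by simp
  then have "walk_len ws' \<le> walk_len ws"
    using ab False walk_len_on_le_walk_len[of e R] unfolding ws ws'_def by simp
  moreover have "walk_len_on e ws' \<le> mdm_len X e"
    using ab P0 Q0 unfolding ws'_def by simp
  moreover have "\<forall>e'. e' \<noteq> e \<longrightarrow> walk_len_on e' ws' \<le> walk_len_on e' ws"
    unfolding ws ws'_def by (auto simp: add_increasing walk_len_on_nonneg)
  ultimately show ?thesis
    using \<open>walk X p ws' q\<close> by blast
qed

lemma walk_reduce: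
  assumes wf: "wf_mdm X" and w: "walk X p ws q"
  shows "\<exists>ws'. walk X p ws' q \<and> walk_len ws' \<le> walk_len ws \<and>
           (\<forall>e\<in>mdm_E X. walk_len_on e ws' \<le> mdm_len X e)"
proof -
  have "\<exists>ws'. walk X p ws' q \<and> walk_len ws' \<le> walk_len ws \<and>
           (\<forall>e\<in>S. walk_len_on e ws' \<le> mdm_len X e)"
    if "finite S" and "S \<subseteq> mdm_E X" for S
    using that
  proof (induction S rule: finite_induct)
    case (insert e S)
    then obtain ws1 where ws1: "walk X p ws1 q" "walk_len ws1 \<le> walk_len ws"
        "\<forall>e\<in>S. walk_len_on e ws1 \<le> mdm_len X e"
      by blast
    with walk_reduce_edge[OF wf ws1(1), of e] insert.prems obtain ws2 where
      "walk X p ws2 q" "walk_len ws2 \<le> walk_len ws1" "walk_len_on e ws2 \<le> mdm_len X e"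
      "\<forall>e'. e' \<noteq> e \<longrightarrow> walk_len_on e' ws2 \<le> walk_len_on e' ws1"
      by auto
    with ws1 show ?case
      by (intro exI[of _ ws2]) force
  qed (use w in blast)
  then show ?thesis
    using wf unfolding wf_mdm_def by blast
qed

section \<open>Rescaling along an isomorphism\<close>

definition mdm_iso ::
  "('v, 'e) mdm \<Rightarrow> ('w, 'f) mdm \<Rightarrow> ('v \<Rightarrow> 'w) \<Rightarrow> ('e \<Rightarrow> 'f) \<Rightarrow> bool"
where
  "mdm_iso X Y f g \<longleftrightarrow> bij_betw f (mdm_V X) (mdm_V Y) \<and> bij_betw g (mdm_E X) (mdm_E Y) \<and>
     (\<forall>e\<in>mdm_E X. mdm_tail Y (g e) = f (mdm_tail X e) \<and> mdm_head Y (g e) = f (mdm_head X e))"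

locale mdm_isomorphism =
  fixes X :: "('v, 'e) mdm" and Y :: "('w, 'f) mdm" and f :: "'v \<Rightarrow> 'w" and g :: "'e \<Rightarrow> 'f"
  assumes wf_X: "wf_mdm X" and wf_Y: "wf_mdm Y" and iso: "mdm_iso X Y f g"
begin

lemma bij_f: "bij_betw f (mdm_V X) (mdm_V Y)"
  and bij_g: "bij_betw g (mdm_E X) (mdm_E Y)"
  and tail_g: "e \<in> mdm_E X \<Longrightarrow> mdm_tail Y (g e) = f (mdm_tail X e)"
  and head_g: "e \<in> mdm_E X \<Longrightarrow> mdm_head Y (g e) = f (mdm_head X e)"
  using iso unfolding mdm_iso_def by auto

lemma g_in: "e \<in> mdm_E X \<Longrightarrow> g e \<in> mdm_E Y"
  using bij_g by (auto simp: bij_betw_def)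

lemma finite_E: "finite (mdm_E X)"
  using wf_X unfolding wf_mdm_def by auto

lemma len_X_pos: "e \<in> mdm_E X \<Longrightarrow> 0 < mdm_len X e"
  using wf_X unfolding wf_mdm_def by auto

lemma len_Y_pos: "e \<in> mdm_E X \<Longrightarrow> 0 < mdm_len Y (g e)"
  using wf_Y g_in unfolding wf_mdm_def by auto

definition scale :: "'e \<Rightarrow> real" where
  "scale e = mdm_len Y (g e) / mdm_len X e"

lemma scale_pos: "e \<in> mdm_E X \<Longrightarrow> 0 < scale e"
  unfolding scale_def using len_X_pos len_Y_pos by simp

definition point_map :: "('v, 'e) gpt \<Rightarrow> ('w, 'f) gpt" where
  "point_map p = (case p of Vtx v \<Rightarrow> Vtx (f v) | EPt e t \<Rightarrow> EPt (g e) (t * scale e))"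

definition step_map :: "'e \<times> real \<times> real \<Rightarrow> 'f \<times> real \<times> real" where
  "step_map = (\<lambda>(e, s, t). (g e, s * scale e, t * scale e))"

definition len_deviation :: real where
  "len_deviation = (\<Sum>e\<in>mdm_E X. \<bar>mdm_len Y (g e) - mdm_len X e\<bar>)"

lemma len_deviation_nonneg: "0 \<le> len_deviation"
  unfolding len_deviation_def by (simp add: sum_nonneg)

lemma on_edge_point_map:
  assumes "on_edge X e p s"
  shows "on_edge Y (g e) (point_map p) (s * scale e)"
proof -
  have e: "e \<in> mdm_E X"
    using assms unfolding on_edge_def by auto
  from assms consider "0 < s" "s < mdm_len X e" "p = EPt e s"
    | "s = 0" "p = Vtx (mdm_tail X e)" | "s = mdm_len X e" "p = Vtx (mdm_head X e)"
    unfolding on_edge_def by auto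
  then show ?thesis
  proof cases
    case 1
    then have "s * scale e < mdm_len Y (g e)"
      using len_X_pos[OF e] len_Y_pos[OF e] by (simp add: scale_def field_simps)
    with 1 show ?thesis
      using scale_pos[OF e] g_in[OF e] unfolding on_edge_def point_map_def by simp
  next
    case 2
    then show ?thesis
      using g_in[OF e] tail_g[OF e] unfolding on_edge_def point_map_def by simp
  next
    case 3
    then show ?thesis
      using g_in[OF e] head_g[OF e] len_X_pos[OF e]
      unfolding on_edge_def point_map_def scale_def by simp
  qed
qed

lemma walk_point_map: "walk X p ws q \<Longrightarrow> walk Y (point_map p) (map step_map ws) (point_map q)"
proof (induction ws arbitrary: p)
  case (Cons step ws)
  obtain e s t where step: "step = (e, s, t)"
    by (cases step) auto
  with Cons.prems obtain x where "on_edge X e p s" "on_edge X e x t" "walk X x ws q"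
    by auto
  then have "on_edge Y (g e) (point_map p) (s * scale e)"
    and "on_edge Y (g e) (point_map x) (t * scale e)"
    and "walk Y (point_map x) (map step_map ws) (point_map q)"
    using Cons.IH on_edge_point_map by auto
  then show ?case
    using step by (auto simp: step_map_def)
qed simp

lemma walk_len_step_map:
  assumes "fst ` set ws \<subseteq> mdm_E X"
  shows "walk_len (map step_map ws) = (\<Sum>e\<in>mdm_E X. scale e * walk_len_on e ws)"
proof -
  have "walk_len (map step_map ws) = sum_list (map (\<lambda>(e, s, t). scale e * \<bar>s - t\<bar>) ws)"
    using assms
    by (induction ws)
      (auto simp: step_map_def abs_mult abs_of_pos scale_pos simp flip: left_diff_distrib)
  also have "\<dots> = (\<Sum>e\<in>mdm_E X. scale e * walk_len_on e ws)"
    using finite_E assms by (rule sum_list_weighted_steps)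
  finally show ?thesis .
qed

lemma walk_len_step_map_le:
  assumes "fst ` set ws \<subseteq> mdm_E X" and "\<forall>e\<in>mdm_E X. walk_len_on e ws \<le> mdm_len X e"
  shows "walk_len (map step_map ws) \<le> walk_len ws + len_deviation"
proof -
  have "scale e * walk_len_on e ws \<le> walk_len_on e ws + \<bar>mdm_len Y (g e) - mdm_len X e\<bar>"
    if e: "e \<in> mdm_E X" for e
  proof -
    have "scale e * walk_len_on e ws = walk_len_on e ws + (scale e - 1) * walk_len_on e ws"
      by (simp add: algebra_simps)
    also have "(scale e - 1) * walk_len_on e ws \<le> \<bar>scale e - 1\<bar> * mdm_len X e"
      using assms(2) e by (intro mult_mono) (simp_all add: walk_len_on_nonneg)
    also have "\<bar>scale e - 1\<bar> * mdm_len X e = \<bar>mdm_len Y (g e) - mdm_len X e\<bar>"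
      using len_X_pos[OF e] by (simp add: scale_def abs_mult[symmetric] field_simps)
    finally show ?thesis
      by simp
  qed
  then have "(\<Sum>e\<in>mdm_E X. scale e * walk_len_on e ws)
      \<le> (\<Sum>e\<in>mdm_E X. walk_len_on e ws) + len_deviation"
    unfolding len_deviation_def sum.distrib[symmetric] by (rule sum_mono)
  then show ?thesis
    using walk_len_step_map[OF assms(1)] walk_len_eq_sum[OF finite_E assms(1)] by simp
qed

lemma mdm_metric_point_map_le:
  "mdm_metric Y (point_map p) (point_map q) \<le> mdm_metric X p q + ennreal len_deviation"
  unfolding mdm_metric_def[of X] ennreal_INF_add_const[symmetric]
proof (rule INF_greatest)
  fix L assume "L \<in> {L. chain X p q L}"
  then obtain ws where "walk X p ws q" and "walk_len ws = L" and "0 \<le> L"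
    using chain_iff_walk chain_nonneg by blast
  then obtain ws' where ws': "walk X p ws' q" "walk_len ws' \<le> L"
      "\<forall>e\<in>mdm_E X. walk_len_on e ws' \<le> mdm_len X e"
    using walk_reduce[OF wf_X] by blast
  have "chain Y (point_map p) (point_map q) (walk_len (map step_map ws'))"
    using walk_point_map[OF ws'(1)] chain_iff_walk by blast
  then have "mdm_metric Y (point_map p) (point_map q) \<le> ennreal (walk_len (map step_map ws'))"
    by (rule mdm_metric_le_chain)
  also have "\<dots> \<le> ennreal (L + len_deviation)"
    using walk_len_step_map_le[OF walk_edges_subset[OF wf_X ws'(1)] ws'(3)] ws'(2)
    by (intro ennreal_leI) linarith
  also have "\<dots> = ennreal L + ennreal len_deviation"
    using \<open>0 \<le> L\<close> len_deviation_nonneg by (rule ennreal_plus)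
  finally show "mdm_metric Y (point_map p) (point_map q) \<le> ennreal L + ennreal len_deviation" .
qed

lemma point_map_in:
  assumes "p \<in> mdm_points X"
  shows "point_map p \<in> mdm_points Y"
proof (cases p)
  case (Vtx v)
  then show ?thesis
    using assms bij_betw_apply[OF bij_f] by (auto simp: mdm_points_def point_map_def)
next
  case (EPt e t)
  then have "e \<in> mdm_E X" and "0 < t" and "t < mdm_len X e"
    using assms by (auto simp: mdm_points_def)
  then have "0 < t * scale e" and "t * scale e < mdm_len Y (g e)"
    using scale_pos len_X_pos len_Y_pos by (auto simp: scale_def field_simps)
  then show ?thesis
    using EPt g_in[OF \<open>e \<in> mdm_E X\<close>] by (auto simp: mdm_points_def point_map_def)
qed

lemma point_map_image: "point_map ` mdm_points X = mdm_points Y"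
proof
  show "point_map ` mdm_points X \<subseteq> mdm_points Y"
    using point_map_in by blast
  show "mdm_points Y \<subseteq> point_map ` mdm_points X"
  proof
    fix q assume "q \<in> mdm_points Y"
    then consider v where "v \<in> mdm_V X" "q = Vtx (f v)"
      | e t where "e \<in> mdm_E X" "0 < t" "t < mdm_len Y (g e)" "q = EPt (g e) t"
      unfolding mdm_points_def bij_betw_imp_surj_on[OF bij_f, symmetric]
        bij_betw_imp_surj_on[OF bij_g, symmetric]
      by blast
    then show "q \<in> point_map ` mdm_points X"
    proof cases
      case 1
      then show ?thesis
        unfolding mdm_points_def point_map_def by force
    next
      case (2 e t)
      then have "0 < t / scale e" and "t / scale e < mdm_len X e"
        using scale_pos[of e] len_X_pos[of e] by (auto simp: scale_def field_simps)
      with 2 have "EPt e (t / scale e) \<in> mdm_points X"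
        by (auto simp: mdm_points_def)
      moreover have "point_map (EPt e (t / scale e)) = q"
        using 2 scale_pos[of e] by (simp add: point_map_def)
      ultimately show ?thesis
        by blast
    qed
  qed
qed

lemma inverse_isomorphism: "mdm_isomorphism Y X (inv_into (mdm_V X) f) (inv_into (mdm_E X) g)"
proof
  show "wf_mdm Y" and "wf_mdm X"
    by (simp_all add: wf_X wf_Y)
  have "mdm_tail X (inv_into (mdm_E X) g e') = inv_into (mdm_V X) f (mdm_tail Y e') \<and>
        mdm_head X (inv_into (mdm_E X) g e') = inv_into (mdm_V X) f (mdm_head Y e')"
    if "e' \<in> mdm_E Y" for e'
  proof -
    obtain e where e: "e \<in> mdm_E X" "e' = g e"
      using bij_g \<open>e' \<in> mdm_E Y\<close> by (auto simp: bij_betw_def)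
    have "mdm_tail X e \<in> mdm_V X" "mdm_head X e \<in> mdm_V X"
      using wf_X e unfolding wf_mdm_def by auto
    then show ?thesis
      using e tail_g head_g bij_f bij_g by (simp add: bij_betw_def inv_into_f_f)
  qed
  then show "mdm_iso Y X (inv_into (mdm_V X) f) (inv_into (mdm_E X) g)"
    unfolding mdm_iso_def using bij_betw_inv_into[OF bij_f] bij_betw_inv_into[OF bij_g] by auto
qed

lemma mdm_metric_le_point_map:
  assumes "p \<in> mdm_points X" and "q \<in> mdm_points X"
  shows "mdm_metric X p q \<le> mdm_metric Y (point_map p) (point_map q) + ennreal len_deviation"
proof -
  interpret inv: mdm_isomorphism Y X "inv_into (mdm_V X) f" "inv_into (mdm_E X) g"
    by (rule inverse_isomorphism)
  have inj_f: "inj_on f (mdm_V X)" and inj_g: "inj_on g (mdm_E X)"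
    using bij_f bij_g by (auto simp: bij_betw_def)
  have inv_point_map: "inv.point_map (point_map x) = x" if "x \<in> mdm_points X" for x
  proof (cases x)
    case (Vtx v)
    then show ?thesis
      using that inj_f by (auto simp: mdm_points_def point_map_def inv.point_map_def)
  next
    case (EPt e t)
    then have "e \<in> mdm_E X"
      using that by (auto simp: mdm_points_def)
    then show ?thesis
      using EPt inj_g len_X_pos[of e] len_Y_pos[of e]
      by (simp add: point_map_def inv.point_map_def scale_def inv.scale_def)
  qed
  have "inv.len_deviation =
      (\<Sum>e\<in>mdm_E X. \<bar>mdm_len X (inv_into (mdm_E X) g (g e)) - mdm_len Y (g e)\<bar>)"
    unfolding inv.len_deviation_def by (rule sum.reindex_bij_betw[OF bij_g, symmetric])
  also have "\<dots> = len_deviation"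
    unfolding len_deviation_def using inj_g by (intro sum.cong) (auto simp: abs_minus_commute)
  finally show ?thesis
    using inv.mdm_metric_point_map_le[of "point_map p" "point_map q"] inv_point_map assms by simp
qed

lemma distortion_map_point_map:
  "distortion_map (mdm_points X) (mdm_metric X) (mdm_points Y) (mdm_metric Y) point_map len_deviation"
proof
  show "ext_metric_on (mdm_points X) (mdm_metric X)"
    and "ext_metric_on (mdm_points Y) (mdm_metric Y)"
    using wf_X wf_Y by (simp_all add: ext_metric_on_mdm_metric)
qed (simp_all add: point_map_image mdm_metric_point_map_le mdm_metric_le_point_map)

lemma mdm_GH_le_len_deviation: "mdm_GH X Y \<le> ennreal (len_deviation / 2)"
  unfolding mdm_GH_def using len_deviation_nonneg
  by (rule distortion_map.GH_dist_le[OF distortion_map_point_map])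

lemma mdm_GH_le_card_mult_SUP:
  "mdm_GH X Y \<le>
    ennreal (real (card (mdm_E X)) / 2) * (SUP e\<in>mdm_E X. ennreal \<bar>mdm_len X e - mdm_len Y (g e)\<bar>)"
    (is "_ \<le> _ * ?S")
proof -
  have "ennreal len_deviation = (\<Sum>e\<in>mdm_E X. ennreal \<bar>mdm_len X e - mdm_len Y (g e)\<bar>)"
    unfolding len_deviation_def by (simp add: abs_minus_commute)
  also have "\<dots> \<le> (\<Sum>e\<in>mdm_E X. ?S)"
    by (intro sum_mono SUP_upper)
  also have "\<dots> = ennreal (real (card (mdm_E X))) * ?S"
    by (simp add: ennreal_of_nat_eq_real_of_nat)
  finally have deviation_le: "ennreal len_deviation \<le> ennreal (real (card (mdm_E X))) * ?S" .
  have "ennreal (len_deviation / 2) = ennreal len_deviation * inverse 2"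
    using len_deviation_nonneg by (simp add: ennreal_divide_numeral[symmetric] divide_ennreal_def)
  also have "\<dots> \<le> ennreal (real (card (mdm_E X))) * ?S * inverse 2"
    using deviation_le by (rule mult_right_mono) simp
  also have "\<dots> = ennreal (real (card (mdm_E X)) / 2) * ?S"
    by (simp add: ennreal_divide_numeral[symmetric] divide_ennreal_def mult_ac)
  finally show ?thesis
    using mdm_GH_le_len_deviation by (rule order_trans[rotated])
qed

end

theorem lemma5p1:
  fixes X :: "('v, 'e) mdm" and X' :: "('w, 'f) mdm"
  assumes "wf_mdm X" and "wf_mdm X'"
  shows "mdm_GH X X' \<le>
    (if mdm_dist X X' = top then top else ennreal (real (card (mdm_E X)) / 2) * mdm_dist X X')"
proof (cases "mdm_dist X X' = top")
  case False
  define isos where "isos = {(f, g). mdm_iso X X' f g}"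
  define dev where "dev fg = (SUP e\<in>mdm_E X. ennreal \<bar>mdm_len X e - mdm_len X' (snd fg e)\<bar>)"
    for fg :: "('v \<Rightarrow> 'w) \<times> ('e \<Rightarrow> 'f)"
  define c where "c = ennreal (real (card (mdm_E X)) / 2)"
  have dist_eq: "mdm_dist X X' = (INF fg\<in>isos. dev fg)"
    unfolding mdm_dist_def isos_def mdm_iso_def dev_def ..
  with False have "isos \<noteq> {}"
    by auto
  have "mdm_GH X X' \<le> (INF fg\<in>isos. c * dev fg)"
  proof (rule INF_greatest)
    fix fg assume "fg \<in> isos"
    with assms interpret mdm_isomorphism X X' "fst fg" "snd fg"
      by unfold_locales (auto simp: isos_def)
    show "mdm_GH X X' \<le> c * dev fg"
      unfolding c_def dev_def by (rule mdm_GH_le_card_mult_SUP)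
  qed
  also have "\<dots> = c * mdm_dist X X'"
    unfolding dist_eq c_def using \<open>isos \<noteq> {}\<close> by (simp add: ennreal_mult_INF)
  finally show ?thesis
    using False unfolding c_def by simp
qed simp

end
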